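(* Every $q$-Gauss sequence is a $q$-Euler–Gauss sequence.
   Context: $\mu$ is the Möbius function, $[n]_q=1+q+\dots+q^{n-1}$; polynomial congruences modulo $[n]_q$ mean divisibility of the difference by $[n]_q$ in $\mathbb{Z}[q]$. A sequence $(a_n(q))$ in $\mathbb{Z}[q]$ is a $q$-Gauss sequence if $\sum_{d\mid n}\mu(d)a_{n/d}(q^d)\equiv0\pmod{[n]_q}$ for all $n\ge1$; it is a $q$-Euler–Gauss sequence if for all $n\ge1$, $\prod_{d\mid n,\,\mu(d)=1}a_{n/d}(q^d)\equiv\prod_{d\mid n,\,\mu(d)=-1}a_{n/d}(q^d)\pmod{[n]_q}$. *)

theory Defs
  imports "HOL-Computational_Algebra.Computational_Algebra"
begin

definition moebius_mu :: "nat \<Rightarrow> int" where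
  "moebius_mu n = (if n = 0 then 0
     else if squarefree n then (-1) ^ card (prime_factors n) else 0)"

definition q_int :: "nat \<Rightarrow> int poly" where
  "q_int n = (\<Sum>i<n. monom 1 i)"

definition subst_pow :: "int poly \<Rightarrow> nat \<Rightarrow> int poly" where
  "subst_pow p d = pcompose p (monom 1 d)"

definition q_gauss :: "(nat \<Rightarrow> int poly) \<Rightarrow> bool" where
  "q_gauss a \<longleftrightarrow> (\<forall>n\<ge>1. q_int n dvd
      (\<Sum>d | d dvd n. smult (moebius_mu d) (subst_pow (a (n div d)) d)))"

definition q_euler_gauss :: "(nat \<Rightarrow> int poly) \<Rightarrow> bool" where
  "q_euler_gauss a \<longleftrightarrow> (\<forall>n\<ge>1. q_int n dvd
      ((\<Prod>d | d dvd n \<and> moebius_mu d = 1. subst_pow (a (n div d)) d)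
       - (\<Prod>d | d dvd n \<and> moebius_mu d = -1. subst_pow (a (n div d)) d)))"

end

theory Submission
  imports Defs
begin

text \<open>
  The polynomial [n]_q is monic and its complex roots are the n-th roots of unity other than 1,
  each simple, so divisibility by [n]_q can be tested by evaluation at these roots. Fix such a
  root z and a prime p dividing its order. Evaluating the Gauss congruences at z and pairing
  every squarefree divisor e not divisible by p with e p shows, by strong induction on n, that
  a_(n/e)(z^e) = a_(n/ep)(z^(ep)). As \<mu>(ep) = -\<mu>(e), the factors of the two Euler-Gauss
  products evaluated at z then match up in pairs.
\<close>

lemma map_poly_of_int_add: "map_poly of_int (p + q) = map_poly of_int p + map_poly of_int q"
  by (rule poly_eqI) (simp add: coeff_map_poly)

lemma map_poly_of_int_diff: "map_poly of_int (p - q) = map_poly of_int p - map_poly of_int q"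
  by (rule poly_eqI) (simp add: coeff_map_poly)

lemma map_poly_of_int_smult: "map_poly of_int (smult c p) = smult (of_int c) (map_poly of_int p)"
  by (rule poly_eqI) (simp add: coeff_map_poly)

lemma map_poly_of_int_mult: "map_poly of_int (p * q) = map_poly of_int p * map_poly of_int q"
  by (rule poly_eqI) (simp add: coeff_map_poly coeff_mult)

lemma map_poly_of_int_sum: "map_poly of_int (sum f A) = (\<Sum>x\<in>A. map_poly of_int (f x))"
  by (induction A rule: infinite_finite_induct) (simp_all add: map_poly_of_int_add)

lemma map_poly_of_int_prod: "map_poly of_int (prod f A) = (\<Prod>x\<in>A. map_poly of_int (f x))"
  by (induction A rule: infinite_finite_induct) (simp_all add: map_poly_of_int_mult)

lemma map_poly_of_int_pcompose:
  "map_poly of_int (pcompose p q) = pcompose (map_poly of_int p) (map_poly of_int q)"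
  by (induction p)
    (simp_all add: pcompose_pCons map_poly_of_int_add map_poly_of_int_mult map_poly_pCons)

lemma poly_map_poly_of_int_subst_pow:
  fixes z :: "'a::comm_ring_1"
  shows "poly (map_poly of_int (subst_pow p d)) z = poly (map_poly of_int p) (z ^ d)"
  by (simp add: subst_pow_def map_poly_of_int_pcompose poly_pcompose map_poly_monom poly_monom)

lemma int_poly_dvd_if_vanishes_on_roots:
  fixes f g :: "int poly" and R :: "'a::{idom,ring_char_0} set"
  assumes monic: "lead_coeff g = 1" and deg: "degree g \<le> card R"
    and g_root: "\<And>z. z \<in> R \<Longrightarrow> poly (map_poly of_int g) z = 0"
    and f_root: "\<And>z. z \<in> R \<Longrightarrow> poly (map_poly of_int f) z = 0"
  shows "g dvd f"
proof -
  have "g \<noteq> 0" using monic by auto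
  define r where "r = pseudo_mod f g"
  obtain c k where "c \<noteq> 0" and div: "smult c f = g * k + r"
    using pseudo_mod(1)[OF \<open>g \<noteq> 0\<close>] r_def by blast
  have "r = 0"
  proof (rule ccontr)
    assume "r \<noteq> 0"
    then have "map_poly (of_int :: int \<Rightarrow> 'a) r \<noteq> 0"
      by (simp add: map_poly_eq_0_iff)
    have "map_poly of_int r
        = (smult (of_int c) (map_poly of_int f) - map_poly of_int g * map_poly of_int k :: 'a poly)"
      by (simp add: div flip: map_poly_of_int_smult map_poly_of_int_mult map_poly_of_int_diff)
    then have "R \<subseteq> {z. poly (map_poly of_int r :: 'a poly) z = 0}"
      using f_root g_root by auto
    then have "card R \<le> card {z. poly (map_poly of_int r :: 'a poly) z = 0}"
      using \<open>map_poly of_int r \<noteq> 0\<close> by (intro card_mono poly_roots_finite)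
    also have "\<dots> \<le> degree r"
      using card_poly_roots_bound[OF \<open>map_poly of_int r \<noteq> 0\<close>] by (simp add: degree_map_poly)
    also have "\<dots> < degree g"
      using pseudo_mod(2)[OF \<open>g \<noteq> 0\<close>] r_def \<open>r \<noteq> 0\<close> by blast
    finally show False using deg by simp
  qed
  then have "g dvd smult c f" using div by simp
  then show ?thesis using dvd_monic[OF monic _ \<open>c \<noteq> 0\<close>] by blast
qed

lemma coeff_q_int: "coeff (q_int n) i = (if i < n then 1 else 0)"
  by (simp add: q_int_def coeff_sum coeff_monom)

lemma degree_q_int: "n > 0 \<Longrightarrow> degree (q_int n) = n - 1"
  by (intro antisym degree_le le_degree) (auto simp: coeff_q_int)

lemma lead_coeff_q_int: "n > 0 \<Longrightarrow> lead_coeff (q_int n) = 1"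
  by (simp add: degree_q_int coeff_q_int)

lemma poly_q_int_root_of_unity:
  fixes z :: "'a::field"
  assumes "z ^ n = 1" "z \<noteq> 1"
  shows "poly (map_poly of_int (q_int n)) z = 0"
  using assms
  by (simp add: q_int_def map_poly_of_int_sum map_poly_monom poly_sum poly_monom sum_gp_strict)

lemma q_int_dvd_iff:
  assumes "n > 0"
  shows "q_int n dvd f \<longleftrightarrow>
    (\<forall>z::complex. z ^ n = 1 \<longrightarrow> z \<noteq> 1 \<longrightarrow> poly (map_poly of_int f) z = 0)"
    (is "_ \<longleftrightarrow> ?vanishes")
proof
  assume "q_int n dvd f"
  then show ?vanishes
    by (auto simp: map_poly_of_int_mult poly_q_int_root_of_unity elim!: dvdE)
next
  assume f_root: ?vanishes
  let ?R = "{z::complex. z ^ n = 1} - {1}"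
  have "card ?R = n - 1"
    using assms card_roots_unity_eq[OF assms] finite_roots_unity[of n]
    by (simp add: card_Diff_singleton)
  then show "q_int n dvd f"
    using assms f_root poly_q_int_root_of_unity
    by (intro int_poly_dvd_if_vanishes_on_roots[where R = ?R, OF lead_coeff_q_int[OF assms]])
      (auto simp: degree_q_int)
qed

lemma moebius_mu_eq_0_iff: "moebius_mu n = 0 \<longleftrightarrow> n = 0 \<or> \<not> squarefree n"
  by (simp add: moebius_mu_def)

lemma moebius_mu_1 [simp]: "moebius_mu (Suc 0) = 1"
  by (simp add: moebius_mu_def)

lemma moebius_mu_mult_prime:
  assumes p: "prime p" and "\<not> p dvd e"
  shows "moebius_mu (e * p) = - moebius_mu e"
proof -
  have "e > 0" using \<open>\<not> p dvd e\<close> by (cases e) auto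
  have "coprime e p" using prime_imp_coprime[OF assms] by (simp add: ac_simps)
  then have "squarefree (e * p) \<longleftrightarrow> squarefree e"
    using squarefree_mult_coprime squarefree_prime[OF p] squarefree_multD by blast
  moreover have "card (prime_factors (e * p)) = Suc (card (prime_factors e))"
    using assms \<open>e > 0\<close>
    by (simp add: prime_factors_product prime_prime_factors in_prime_factors_iff)
  ultimately show ?thesis
    using \<open>e > 0\<close> p by (simp add: moebius_mu_def prime_gt_0_nat)
qed

lemma squarefree_divisors_eq_Un_image:
  fixes p n :: nat
  assumes p: "prime p" and "p dvd n"
  defines "E \<equiv> {e. e dvd n \<and> \<not> p dvd e \<and> moebius_mu e \<noteq> 0}"
  shows "{d. d dvd n \<and> moebius_mu d \<noteq> 0} = E \<union> (\<lambda>e. e * p) ` E"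
proof (intro equalityI subsetI)
  fix d assume "d \<in> {d. d dvd n \<and> moebius_mu d \<noteq> 0}"
  then have d: "d dvd n" "moebius_mu d \<noteq> 0" by simp_all
  show "d \<in> E \<union> (\<lambda>e. e * p) ` E"
  proof (cases "p dvd d")
    case True
    then obtain e where e: "d = e * p" by (metis dvdE mult.commute)
    have "\<not> p dvd e"
    proof
      assume "p dvd e"
      then have "p ^ 2 dvd d" by (simp add: e power2_eq_square)
      then have "\<not> squarefree d" using p by (intro not_squarefreeI) auto
      then show False using d by (simp add: moebius_mu_eq_0_iff)
    qed
    moreover have "e dvd n" using d(1) e by (simp add: dvd_mult_left)
    moreover have "moebius_mu e \<noteq> 0"
      using d(2) e moebius_mu_mult_prime[OF p \<open>\<not> p dvd e\<close>] by simp
    ultimately have "e \<in> E" by (simp add: E_def)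
    then show ?thesis unfolding e by blast
  qed (simp add: E_def d)
next
  fix d assume "d \<in> E \<union> (\<lambda>e. e * p) ` E"
  then consider "d \<in> E" | e where "e \<in> E" "d = e * p" by blast
  then show "d \<in> {d. d dvd n \<and> moebius_mu d \<noteq> 0}"
  proof cases
    case 1
    then show ?thesis by (simp add: E_def)
  next
    case 2
    then have e: "e dvd n" "\<not> p dvd e" "moebius_mu e \<noteq> 0" by (simp_all add: E_def)
    have "coprime e p" using prime_imp_coprime[OF p e(2)] by (simp add: ac_simps)
    with e(1) \<open>p dvd n\<close> have "e * p dvd n" by (rule divides_mult)
    then show ?thesis using 2 e moebius_mu_mult_prime[OF p e(2)] by simp
  qed
qed

context comm_monoid_set
begin

lemma squarefree_divisors_prime_split:
  assumes p: "prime p" and "p dvd n" "n > 0"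
  shows "F g {d. d dvd n \<and> moebius_mu d \<noteq> 0}
    = F (\<lambda>e. g e \<^bold>* g (e * p)) {e. e dvd n \<and> \<not> p dvd e \<and> moebius_mu e \<noteq> 0}"
    (is "_ = F _ ?E")
proof -
  have "finite ?E" using \<open>n > 0\<close> by (auto intro: finite_subset[OF _ finite_divisors_nat])
  moreover have "?E \<inter> (\<lambda>e. e * p) ` ?E = {}" by auto
  moreover have "inj_on (\<lambda>e. e * p) ?E" using p by (auto simp: inj_on_def prime_gt_0_nat)
  ultimately show ?thesis
    by (simp add: squarefree_divisors_eq_Un_image[OF assms(1,2)] union_disjoint reindex distrib)
qed

end

lemma sum_moebius_divisors_prime_split:
  fixes g :: "nat \<Rightarrow> 'a::comm_ring_1"
  assumes "prime p" "p dvd n" "n > 0"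
  shows "(\<Sum>d | d dvd n. of_int (moebius_mu d) * g d)
    = (\<Sum>e | e dvd n \<and> \<not> p dvd e. of_int (moebius_mu e) * (g e - g (e * p)))"
proof -
  have "(\<Sum>d | d dvd n. of_int (moebius_mu d) * g d)
      = (\<Sum>d | d dvd n \<and> moebius_mu d \<noteq> 0. of_int (moebius_mu d) * g d)"
    using \<open>n > 0\<close> by (intro sum.mono_neutral_right) auto
  also have "\<dots> = (\<Sum>e | e dvd n \<and> \<not> p dvd e \<and> moebius_mu e \<noteq> 0.
      of_int (moebius_mu e) * g e + of_int (moebius_mu (e * p)) * g (e * p))"
    by (rule sum.squarefree_divisors_prime_split[OF assms])
  also have "\<dots> = (\<Sum>e | e dvd n \<and> \<not> p dvd e. of_int (moebius_mu e) * (g e - g (e * p)))"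
    using assms by (intro sum.mono_neutral_cong_left) (auto simp: moebius_mu_mult_prime algebra_simps)
  finally show ?thesis .
qed

lemma prod_divisors_moebius_pos_eq_neg:
  fixes G :: "nat \<Rightarrow> 'a::comm_monoid_mult"
  assumes "prime p" "p dvd n" "n > 0"
    and G: "\<And>e. e dvd n \<Longrightarrow> \<not> p dvd e \<Longrightarrow> G (e * p) = G e"
  shows "(\<Prod>d | d dvd n \<and> moebius_mu d = 1. G d) = (\<Prod>d | d dvd n \<and> moebius_mu d = -1. G d)"
proof -
  have split: "(\<Prod>d | d dvd n \<and> moebius_mu d = s. G d)
      = (\<Prod>e | e dvd n \<and> \<not> p dvd e \<and> moebius_mu e \<noteq> 0.
          (if moebius_mu e = s then G e else 1) * (if moebius_mu e = - s then G e else 1))"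
    if "s \<noteq> 0" for s
  proof -
    have "(\<Prod>d | d dvd n \<and> moebius_mu d = s. G d)
        = (\<Prod>d | d dvd n \<and> moebius_mu d \<noteq> 0. if moebius_mu d = s then G d else 1)"
      using \<open>n > 0\<close> \<open>s \<noteq> 0\<close> by (intro prod.mono_neutral_cong_left) auto
    also have "\<dots> = (\<Prod>e | e dvd n \<and> \<not> p dvd e \<and> moebius_mu e \<noteq> 0.
        (if moebius_mu e = s then G e else 1) * (if moebius_mu (e * p) = s then G (e * p) else 1))"
      by (rule prod.squarefree_divisors_prime_split[OF assms(1-3)])
    also have "\<dots> = (\<Prod>e | e dvd n \<and> \<not> p dvd e \<and> moebius_mu e \<noteq> 0.
        (if moebius_mu e = s then G e else 1) * (if moebius_mu e = - s then G e else 1))"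
      using assms by (intro prod.cong) (auto simp: moebius_mu_mult_prime G)
    finally show ?thesis .
  qed
  show ?thesis
    unfolding split[of 1, simplified] split[of "-1", simplified] by (simp add: mult.commute)
qed

lemma prime_dvd_periods_of_root_of_unity:
  fixes z :: "'a::monoid_mult"
  assumes "n > 0" "z ^ n = 1" "z \<noteq> 1"
  obtains p where "prime p" "\<And>k. z ^ k = 1 \<Longrightarrow> p dvd k"
proof -
  define m where "m = (LEAST k. k > 0 \<and> z ^ k = 1)"
  have m: "m > 0" "z ^ m = 1"
    using LeastI[of "\<lambda>k. k > 0 \<and> z ^ k = 1" n] assms unfolding m_def by auto
  have "m dvd k" if "z ^ k = 1" for k
  proof (rule ccontr)
    assume "\<not> m dvd k"
    then have "k mod m > 0" by (simp add: mod_greater_zero_iff_not_dvd)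
    have "z ^ k = (z ^ m) ^ (k div m) * z ^ (k mod m)"
      by (simp flip: power_mult power_add)
    then have "z ^ (k mod m) = 1" using that m by simp
    then have "m \<le> k mod m" using \<open>k mod m > 0\<close> unfolding m_def by (intro Least_le) auto
    then show False using mod_less_divisor[OF \<open>m > 0\<close>, of k] by linarith
  qed
  moreover obtain p where "prime p" "p dvd m"
    using m assms(3) prime_factor_nat[of m] by fastforce
  ultimately show ?thesis using that dvd_trans by blast
qed

lemma q_gauss_eval_root_of_unity:
  fixes z :: complex
  assumes "q_gauss a" "n > 0" "z ^ n = 1" "z \<noteq> 1"
  shows "(\<Sum>d | d dvd n. of_int (moebius_mu d) * poly (map_poly of_int (a (n div d))) (z ^ d)) = 0"
  using assms
  by (auto simp: q_gauss_def q_int_dvd_iff map_poly_of_int_sum map_poly_of_int_smult poly_sum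
      poly_map_poly_of_int_subst_pow)

lemma q_gauss_eval_mult_prime:
  fixes z :: complex
  assumes a: "q_gauss a" and p: "prime p" and "n > 0" "z ^ n = 1"
    and periods: "\<And>k. z ^ k = 1 \<Longrightarrow> p dvd k" and "e dvd n" "\<not> p dvd e"
  shows "poly (map_poly of_int (a (n div (e * p)))) (z ^ (e * p))
    = poly (map_poly of_int (a (n div e))) (z ^ e)"
  using assms(3-)
proof (induction n arbitrary: z e rule: less_induct)
  case (less n)
  define g where "g d = poly (map_poly of_int (a (n div d))) (z ^ d)" for d
  txt \<open>For e \<noteq> 1 the claim is the induction hypothesis for n/e and z^e. In the Gauss
    congruence at z these cases cancel every pair except g 1 - g p, which settles e = 1.\<close>
  have shift: "g (e' * p) = g e'" if "e' dvd n" "\<not> p dvd e'" "e' \<noteq> 1" for e'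
  proof -
    have "e' > 1" using that by (cases e') auto
    then have "n div e' < n" using less.prems(1) by (intro div_less_dividend)
    moreover have "n div e' > 0"
      using \<open>e' > 1\<close> that less.prems(1) by (simp add: div_greater_zero_iff dvd_imp_le)
    moreover have "(z ^ e') ^ (n div e') = 1"
      using that less.prems(2) by (simp flip: power_mult)
    moreover have "p dvd k" if "(z ^ e') ^ k = 1" for k
      using less.prems(3)[of "e' * k"] that p \<open>\<not> p dvd e'\<close>
      by (simp add: power_mult prime_dvd_mult_iff)
    ultimately show ?thesis
      using less.IH[of "n div e'" "z ^ e'" 1] prime_gt_1_nat[OF p]
      by (simp add: g_def div_mult2_eq power_mult)
  qed
  show ?case
  proof (cases "e = 1")
    case True
    have "z \<noteq> 1" using less.prems(3)[of 1] p by auto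
    have "p dvd n" using less.prems(2,3) by blast
    have "0 = (\<Sum>d | d dvd n. of_int (moebius_mu d) * g d)"
      using q_gauss_eval_root_of_unity[OF a less.prems(1,2) \<open>z \<noteq> 1\<close>] by (simp add: g_def)
    also have "\<dots> = (\<Sum>d | d dvd n \<and> \<not> p dvd d. of_int (moebius_mu d) * (g d - g (d * p)))"
      by (rule sum_moebius_divisors_prime_split[OF p \<open>p dvd n\<close> less.prems(1)])
    also have "\<dots> = (\<Sum>d\<in>{1}. of_int (moebius_mu d) * (g d - g (d * p)))"
      using less.prems(1) p shift
      by (intro sum.mono_neutral_right) (auto simp: prime_nat_iff)
    finally show ?thesis using True by (simp add: g_def)
  qed (use shift less.prems in \<open>simp add: g_def\<close>)
qed

lemma q_gauss_eval_prod_moebius_pos_eq_neg: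
  fixes z :: complex
  assumes a: "q_gauss a" and "n > 0" "z ^ n = 1" "z \<noteq> 1"
  shows "(\<Prod>d | d dvd n \<and> moebius_mu d = 1. poly (map_poly of_int (a (n div d))) (z ^ d))
    = (\<Prod>d | d dvd n \<and> moebius_mu d = -1. poly (map_poly of_int (a (n div d))) (z ^ d))"
proof -
  obtain p where p: "prime p" and periods: "\<And>k. z ^ k = 1 \<Longrightarrow> p dvd k"
    using prime_dvd_periods_of_root_of_unity assms(2-4) by blast
  have "p dvd n" using periods \<open>z ^ n = 1\<close> .
  show ?thesis
    by (rule prod_divisors_moebius_pos_eq_neg[OF p \<open>p dvd n\<close> \<open>n > 0\<close>])
      (rule q_gauss_eval_mult_prime[OF a p \<open>n > 0\<close> \<open>z ^ n = 1\<close> periods])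
qed

theorem theorem5:
  fixes a :: "nat \<Rightarrow> int poly"
  assumes "q_gauss a"
  shows "q_euler_gauss a"
  using q_gauss_eval_prod_moebius_pos_eq_neg[OF assms]
  by (simp add: q_euler_gauss_def q_int_dvd_iff map_poly_of_int_diff map_poly_of_int_prod poly_prod
      poly_map_poly_of_int_subst_pow)

end
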